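(* Let $p_0, p_1, \dots, p_k$ with $k \leq 2d$ be the vertices visited on the path in the near neighbor graph during a single tour of the query algorithm. Then with overwhelming probability over the randomness of the data set, $$\sum_{i=0}^k |\mathcal{B}(p_i)| = O(d\, n\, C(\alpha)).$$
   Context: $\mathcal{S}^{d-1}$ is the Euclidean unit sphere in $\mathbb{R}^d$; $C(\alpha)=\Pr_{X\sim\mathcal{U}(\mathcal{S}^{d-1})}(X_1>\alpha)$; $\alpha\in(0,1)$ with $nC(\alpha)\gg1$. The data set $\mathcal{D}$ consists of $n$ points independently uniform on $\mathcal{S}^{d-1}$; the $\alpha$-near neighbor graph has vertex set $\mathcal{D}$ and an edge between $p,p'$ iff $\langle p,p'\rangle\ge\alpha$, with neighbor sets $\mathcal{B}(p)$. A tour of the query algorithm for a query $q$: start at a uniformly random vertex $p_0$, and repeatedly move from the current vertex $p$ to some $p'\in\mathcal{B}(p)$ with $\langle p',q\rangle\ge\langle p,q\rangle+\frac1d$, until no such $p'$ exists or the target is reached. *)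

theory Defs
  imports "HOL-Probability.Probability"
begin

text \<open>Points of R^d are represented as functions nat => real, extensional on {..<d}.\<close>

definition ip :: "nat \<Rightarrow> (nat \<Rightarrow> real) \<Rightarrow> (nat \<Rightarrow> real) \<Rightarrow> real" where
  "ip d x y = (\<Sum>i<d. x i * y i)"

definition vnorm :: "nat \<Rightarrow> (nat \<Rightarrow> real) \<Rightarrow> real" where
  "vnorm d x = sqrt (ip d x x)"

definition unit_sphere :: "nat \<Rightarrow> (nat \<Rightarrow> real) set" where
  "unit_sphere d = {x \<in> PiE {..<d} (\<lambda>_. UNIV). vnorm d x = 1}"

definition unit_ball :: "nat \<Rightarrow> (nat \<Rightarrow> real) set" where
  "unit_ball d = {x \<in> PiE {..<d} (\<lambda>_. UNIV). vnorm d x \<le> 1}"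

definition radial :: "nat \<Rightarrow> (nat \<Rightarrow> real) \<Rightarrow> (nat \<Rightarrow> real)" where
  "radial d x = restrict (\<lambda>i. x i / vnorm d x) {..<d}"

text \<open>Uniform (normalized surface) measure on the unit sphere S^(d-1), defined as the
  cone measure: the image of the uniform distribution on the unit ball under radial projection.\<close>
definition unif_sphere :: "nat \<Rightarrow> (nat \<Rightarrow> real) measure" where
  "unif_sphere d = distr (uniform_measure (PiM {..<d} (\<lambda>_. lborel)) (unit_ball d))
                         (PiM {..<d} (\<lambda>_. borel)) (radial d)"

text \<open>C(alpha) = Pr_{X ~ U(S^(d-1))} (X_1 > alpha); coordinate 1 is index 0 here.\<close>
definition cap :: "nat \<Rightarrow> real \<Rightarrow> real" where
  "cap d \<alpha> = measure (unif_sphere d) {x \<in> space (unif_sphere d). x 0 > \<alpha>}"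

definition data_measure :: "nat \<Rightarrow> nat \<Rightarrow> (nat \<Rightarrow> nat \<Rightarrow> real) measure" where
  "data_measure d n = PiM {..<n} (\<lambda>_. unif_sphere d)"

definition nbrs :: "nat \<Rightarrow> nat \<Rightarrow> real \<Rightarrow> (nat \<Rightarrow> nat \<Rightarrow> real) \<Rightarrow> nat \<Rightarrow> nat set" where
  "nbrs d n \<alpha> D i = {j. j < n \<and> j \<noteq> i \<and> ip d (D i) (D j) \<ge> \<alpha>}"

definition tour_path :: "nat \<Rightarrow> nat \<Rightarrow> real \<Rightarrow> (nat \<Rightarrow> nat \<Rightarrow> real) \<Rightarrow> (nat \<Rightarrow> real) \<Rightarrow> nat list \<Rightarrow> bool" where
  "tour_path d n \<alpha> D q ps \<longleftrightarrow> ps \<noteq> [] \<and> (\<forall>p\<in>set ps. p < n) \<and>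
     (\<forall>i. i + 1 < length ps \<longrightarrow>
        ps ! (i+1) \<in> nbrs d n \<alpha> D (ps ! i) \<and>
        ip d (D (ps ! (i+1))) q \<ge> ip d (D (ps ! i)) q + 1 / real d)"

end

(* The degree of a fixed data point D_i is a sum of n - 1 independent indicators, each of
   probability at most C(alpha): by rotation invariance of the uniform sphere measure, the cap
   {w. alpha <= <D_i, w>} has the same measure as the cap around the first axis. Rotations are
   composed of Givens rotations, each a product of three shears, which preserve Lebesgue measure.
   A Chernoff bound with base 2 makes the degree at least 4 n C(alpha) with probability at most
   exp (- n C(alpha)); a union bound over the n vertices, together with the bound 2d + 1 on the
   number of vertices of a tour, gives the claim with K = 10 and c = 1. *)

theory Submission
  imports Defs
begin

section \<open>Lebesgue measure preserving rotations\<close>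

abbreviation lborel_R :: "nat \<Rightarrow> (nat \<Rightarrow> real) measure" where
  "lborel_R d \<equiv> PiM {..<d} (\<lambda>_. lborel)"

definition lborel_preserving :: "nat \<Rightarrow> ((nat \<Rightarrow> real) \<Rightarrow> (nat \<Rightarrow> real)) \<Rightarrow> bool" where
  "lborel_preserving d T \<longleftrightarrow>
     T \<in> lborel_R d \<rightarrow>\<^sub>M lborel_R d \<and> distr (lborel_R d) (lborel_R d) T = lborel_R d"

definition preserves_ip :: "nat \<Rightarrow> ((nat \<Rightarrow> real) \<Rightarrow> (nat \<Rightarrow> real)) \<Rightarrow> bool" where
  "preserves_ip d T \<longleftrightarrow> (\<forall>x y. ip d (T x) (T y) = ip d x y)"

lemma lborel_preservingI:
  assumes T: "T \<in> lborel_R d \<rightarrow>\<^sub>M lborel_R d"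
    and invariant: "\<And>f. f \<in> borel_measurable (lborel_R d) \<Longrightarrow>
      (\<integral>\<^sup>+x. f (T x) \<partial>lborel_R d) = (\<integral>\<^sup>+x. f x \<partial>lborel_R d)"
  shows "lborel_preserving d T"
  unfolding lborel_preserving_def
proof (intro conjI T measure_eqI)
  fix A assume "A \<in> sets (distr (lborel_R d) (lborel_R d) T)"
  then have A: "A \<in> sets (lborel_R d)" by simp
  have "emeasure (distr (lborel_R d) (lborel_R d) T) A = emeasure (lborel_R d) (T -` A \<inter> space (lborel_R d))"
    using T A by (rule emeasure_distr)
  also have "\<dots> = (\<integral>\<^sup>+x. indicator A (T x) \<partial>lborel_R d)"
    using measurable_sets[OF T A]
    by (simp add: nn_integral_indicator[symmetric] del: nn_integral_indicator)
       (intro nn_integral_cong, auto simp: indicator_def)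
  also have "\<dots> = emeasure (lborel_R d) A"
    using A by (simp add: invariant)
  finally show "emeasure (distr (lborel_R d) (lborel_R d) T) A = emeasure (lborel_R d) A" .
qed simp

lemma lborel_preserving_id: "lborel_preserving d id"
  by (simp add: lborel_preserving_def distr_id[unfolded id_def[symmetric]])

lemma lborel_preserving_comp:
  assumes "lborel_preserving d T" "lborel_preserving d S"
  shows "lborel_preserving d (T \<circ> S)"
  using assms by (auto simp: lborel_preserving_def distr_distr[symmetric])

lemma emeasure_lborel_preserving:
  assumes T: "lborel_preserving d T" and Q: "{w \<in> space (lborel_R d). Q w} \<in> sets (lborel_R d)"
  shows "emeasure (lborel_R d) {z \<in> space (lborel_R d). Q (T z)} =
         emeasure (lborel_R d) {w \<in> space (lborel_R d). Q w}"
proof -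
  have Tm: "T \<in> lborel_R d \<rightarrow>\<^sub>M lborel_R d"
    and Td: "distr (lborel_R d) (lborel_R d) T = lborel_R d"
    using T by (auto simp: lborel_preserving_def)
  have "{z \<in> space (lborel_R d). Q (T z)} = T -` {w \<in> space (lborel_R d). Q w} \<inter> space (lborel_R d)"
    using measurable_space[OF Tm] by auto
  then show ?thesis
    using emeasure_distr[OF Tm Q] Td by simp
qed

lemma preserves_ip_id: "preserves_ip d id"
  by (simp add: preserves_ip_def)

lemma preserves_ip_comp: "preserves_ip d T \<Longrightarrow> preserves_ip d S \<Longrightarrow> preserves_ip d (T \<circ> S)"
  by (simp add: preserves_ip_def)

definition shear :: "nat \<Rightarrow> nat \<Rightarrow> real \<Rightarrow> (nat \<Rightarrow> real) \<Rightarrow> (nat \<Rightarrow> real)" where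
  "shear a b u x = x(a := x a + u * x b)"

lemma measurable_shear:
  assumes "a < d" "b < d"
  shows "shear a b u \<in> lborel_R d \<rightarrow>\<^sub>M lborel_R d"
proof -
  have "(\<lambda>x i. if i = a then x a + u * x b else x i) \<in> lborel_R d \<rightarrow>\<^sub>M lborel_R d"
  proof (rule measurable_PiM_single')
    fix i assume i: "i \<in> {..<d}"
    have [measurable]: "(\<lambda>x. x a) \<in> borel_measurable (lborel_R d)"
      "(\<lambda>x. x b) \<in> borel_measurable (lborel_R d)" "(\<lambda>x. x i) \<in> borel_measurable (lborel_R d)"
      using assms i measurable_component_singleton[of _ "{..<d}" "\<lambda>_. lborel::real measure"] by auto
    show "(\<lambda>x. if i = a then x a + u * x b else x i) \<in> lborel_R d \<rightarrow>\<^sub>M lborel"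
      unfolding measurable_lborel1 by (cases "i = a") simp_all
  next
    show "(\<lambda>x i. if i = a then x a + u * x b else x i) \<in> space (lborel_R d) \<rightarrow> (\<Pi>\<^sub>E i\<in>{..<d}. space lborel)"
      using assms by (auto simp: space_PiM PiE_def extensional_def)
  qed
  moreover have "(\<lambda>x i. if i = a then x a + u * x b else x i) = shear a b u"
    by (auto simp: shear_def fun_eq_iff)
  ultimately show ?thesis by simp
qed

text \<open>Fubini along coordinate \<open>a\<close>: on each line parallel to the \<open>a\<close>-axis the shear is a translation.\<close>

lemma lborel_preserving_shear:
  assumes ab: "a < d" "b < d" "a \<noteq> b"
  shows "lborel_preserving d (shear a b u)"
proof (rule lborel_preservingI)
  show Sm: "shear a b u \<in> lborel_R d \<rightarrow>\<^sub>M lborel_R d" using measurable_shear ab by auto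
  fix f :: "_ \<Rightarrow> ennreal" assume f[measurable]: "f \<in> borel_measurable (lborel_R d)"
  interpret P: product_sigma_finite "\<lambda>_. lborel :: real measure" by standard
  define I where "I = {..<d} - {a}"
  have ins: "{..<d} = insert a I" "a \<notin> I" "finite I" using ab by (auto simp: I_def)
  have fs: "(\<lambda>x. f (shear a b u x)) \<in> borel_measurable (lborel_R d)"
    using Sm f by (auto intro: measurable_comp[unfolded comp_def])
  have "(\<integral>\<^sup>+x. f (shear a b u x) \<partial>lborel_R d) =
        (\<integral>\<^sup>+ x. (\<integral>\<^sup>+ y. f (shear a b u (x(a := y))) \<partial>lborel) \<partial>PiM I (\<lambda>_. lborel))"
    using P.product_nn_integral_insert[OF ins(3,2), of "\<lambda>x. f (shear a b u x)"] fs ins(1) by simp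
  also have "\<dots> = (\<integral>\<^sup>+ x. (\<integral>\<^sup>+ y. f (x(a := y)) \<partial>lborel) \<partial>PiM I (\<lambda>_. lborel))"
  proof (rule nn_integral_cong)
    fix x assume x: "x \<in> space (PiM I (\<lambda>_. lborel::real measure))"
    have g: "(\<lambda>y. f (x(a := y))) \<in> borel_measurable lborel"
      using measurable_comp[OF measurable_component_update f[unfolded ins(1)], OF x ins(2)]
      unfolding comp_def by simp
    have "\<And>y. shear a b u (x(a := y)) = x(a := u * x b + 1 * y)"
      using ab by (auto simp: shear_def fun_eq_iff)
    then show "(\<integral>\<^sup>+ y. f (shear a b u (x(a := y))) \<partial>lborel) = (\<integral>\<^sup>+ y. f (x(a := y)) \<partial>lborel)"
      using nn_integral_real_affine[OF g[unfolded measurable_lborel2], of 1 "u * x b"] by simp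
  qed
  also have "\<dots> = (\<integral>\<^sup>+x. f x \<partial>lborel_R d)"
    using P.product_nn_integral_insert[OF ins(3,2), of f] f ins(1) by simp
  finally show "(\<integral>\<^sup>+x. f (shear a b u x) \<partial>lborel_R d) = (\<integral>\<^sup>+x. f x \<partial>lborel_R d)" .
qed

definition givens :: "nat \<Rightarrow> nat \<Rightarrow> real \<Rightarrow> real \<Rightarrow> (nat \<Rightarrow> real) \<Rightarrow> (nat \<Rightarrow> real)" where
  "givens a b c s x = x(a := c * x a + s * x b, b := - s * x a + c * x b)"

text \<open>Paeth's decomposition of a plane rotation into three shears.\<close>

lemma givens_eq_shears:
  assumes "a \<noteq> b" "s \<noteq> 0" "c\<^sup>2 + s\<^sup>2 = 1"
  shows "givens a b c s = shear a b ((1 - c) / s) \<circ> shear b a (- s) \<circ> shear a b ((1 - c) / s)"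
proof -
  define u where "u = (1 - c) / s"
  have us: "u * s = 1 - c" using assms by (simp add: u_def)
  have "u * (1 + c) * s = (u * s) * (1 + c)" by (simp add: algebra_simps)
  also have "\<dots> = (1 - c) * (1 + c)" by (simp only: us)
  also have "\<dots> = s * s" using assms by (simp add: algebra_simps power2_eq_square)
  finally have uc: "u * (1 + c) = s" using assms by simp
  have "(x a + u * x b) + u * (x b + (- s) * (x a + u * x b)) = x a * (1 - u * s) + x b * (u * (2 - u * s))"
    and "x b + (- s) * (x a + u * x b) = - s * x a + (1 - u * s) * x b" for x :: "nat \<Rightarrow> real"
    by (simp_all add: algebra_simps)
  moreover have "1 - u * s = c" "u * (2 - u * s) = s" using us uc by simp_all
  ultimately have "(x a + u * x b) + u * (x b + (- s) * (x a + u * x b)) = c * x a + s * x b"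
    and "x b + (- s) * (x a + u * x b) = - s * x a + c * x b" for x :: "nat \<Rightarrow> real"
    by (simp_all only:) (simp add: mult.commute)
  then show ?thesis
    using assms by (auto simp: u_def[symmetric] givens_def shear_def fun_eq_iff)
qed

lemma lborel_preserving_givens:
  assumes "a < d" "b < d" "a \<noteq> b" "s \<noteq> 0" "c\<^sup>2 + s\<^sup>2 = 1"
  shows "lborel_preserving d (givens a b c s)"
  unfolding givens_eq_shears[OF assms(3-5)] using assms
  by (intro lborel_preserving_comp lborel_preserving_shear) auto

lemma sum_lessThan_remove2:
  fixes f :: "nat \<Rightarrow> 'a::comm_monoid_add"
  assumes "a < d" "b < d" "a \<noteq> b"
  shows "(\<Sum>i<d. f i) = f a + f b + (\<Sum>i\<in>{..<d} - {a, b}. f i)"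
proof -
  have "(\<Sum>i<d. f i) = f a + (\<Sum>i\<in>{..<d} - {a}. f i)"
    using assms by (intro sum.remove) simp_all
  also have "(\<Sum>i\<in>{..<d} - {a}. f i) = f b + (\<Sum>i\<in>{..<d} - {a} - {b}. f i)"
    using assms by (subst sum.remove[of _ b]) auto
  finally show ?thesis by (simp add: Diff_insert2[symmetric] insert_commute add.assoc)
qed

lemma preserves_ip_givens:
  assumes "a < d" "b < d" "a \<noteq> b" "c\<^sup>2 + s\<^sup>2 = 1"
  shows "preserves_ip d (givens a b c s)"
  unfolding preserves_ip_def
proof (intro allI)
  fix x y
  have rest: "(\<Sum>i\<in>{..<d} - {a, b}. givens a b c s x i * givens a b c s y i) = (\<Sum>i\<in>{..<d} - {a, b}. x i * y i)"
    by (rule sum.cong) (auto simp: givens_def)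
  have "(c * x a + s * x b) * (c * y a + s * y b) + (- s * x a + c * x b) * (- s * y a + c * y b)
     = (c\<^sup>2 + s\<^sup>2) * (x a * y a) + (c\<^sup>2 + s\<^sup>2) * (x b * y b)"
    by (simp add: algebra_simps power2_eq_square)
  then show "ip d (givens a b c s x) (givens a b c s y) = ip d x y"
    unfolding ip_def sum_lessThan_remove2[OF assms(1-3), of "\<lambda>i. givens a b c s x i * givens a b c s y i"]
      sum_lessThan_remove2[OF assms(1-3), of "\<lambda>i. x i * y i"] rest
    using assms by (simp add: givens_def)
qed

lemma sum_lessThan_only0:
  fixes g :: "nat \<Rightarrow> 'a::comm_monoid_add"
  assumes "0 < d" "\<And>i. 0 < i \<Longrightarrow> i < d \<Longrightarrow> g i = 0"
  shows "(\<Sum>i<d. g i) = g 0"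
proof -
  have "(\<Sum>i<d. g i) = g 0 + (\<Sum>i\<in>{..<d} - {0}. g i)"
    using assms by (intro sum.remove) simp_all
  also have "(\<Sum>i\<in>{..<d} - {0}. g i) = 0"
    using assms by (intro sum.neutral) auto
  finally show ?thesis by simp
qed

lemma givens_annihilate:
  assumes "a \<noteq> b" "y b \<noteq> 0"
  obtains c s where "c\<^sup>2 + s\<^sup>2 = 1" "s \<noteq> 0" "givens a b c s y a > 0" "givens a b c s y b = 0"
proof -
  define r where "r = sqrt ((y a)\<^sup>2 + (y b)\<^sup>2)"
  have r2: "r\<^sup>2 = (y a)\<^sup>2 + (y b)\<^sup>2" unfolding r_def by simp
  have r: "r > 0" unfolding r_def using assms by (simp add: add_nonneg_pos)
  have "(y a / r)\<^sup>2 + (y b / r)\<^sup>2 = 1"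
    using r2 r assms by (simp add: power_divide add_divide_distrib[symmetric])
  moreover have "givens a b (y a / r) (y b / r) y a = r"
  proof -
    have "givens a b (y a / r) (y b / r) y a = ((y a)\<^sup>2 + (y b)\<^sup>2) / r"
      using assms by (simp add: givens_def power2_eq_square add_divide_distrib)
    also have "\<dots> = r\<^sup>2 / r" by (simp only: r2)
    also have "\<dots> = r" using r by (simp add: power2_eq_square)
    finally show ?thesis .
  qed
  moreover have "givens a b (y a / r) (y b / r) y b = 0"
    by (simp add: givens_def algebra_simps)
  ultimately show ?thesis using that[of "y a / r" "y b / r"] r assms by simp
qed

text \<open>Givens rotations in the planes \<open>(0, 1), \<dots>, (0, k)\<close> successively annihilate the
  coordinates \<open>1, \<dots>, k\<close> of \<open>x\<close>.\<close>

lemma rotate_into_first_coordinates: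
  assumes d: "2 \<le> d"
  shows "\<exists>T. lborel_preserving d T \<and> preserves_ip d T \<and> T x 0 \<ge> 0 \<and>
           (\<forall>i. 0 < i \<and> i \<le> k \<and> i < d \<longrightarrow> T x i = 0)"
proof (induction k)
  case 0
  show ?case
  proof (cases "x 0 \<ge> 0")
    case True
    then show ?thesis using lborel_preserving_id preserves_ip_id by (intro exI[of _ id]) (simp add: id_def)
  next
    case False
    let ?R = "givens 0 1 (-1) 0"
    have R: "?R = givens 0 1 0 1 \<circ> givens 0 1 0 1" by (auto simp: givens_def fun_eq_iff)
    have "lborel_preserving d ?R"
      unfolding R using d by (intro lborel_preserving_comp lborel_preserving_givens) auto
    moreover have "preserves_ip d ?R" using d by (intro preserves_ip_givens) auto
    moreover have "?R x 0 = - x 0" by (simp add: givens_def)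
    ultimately show ?thesis using False by (intro exI[of _ ?R]) simp
  qed
next
  case (Suc k)
  then obtain T where T: "lborel_preserving d T" "preserves_ip d T" "T x 0 \<ge> 0"
    "\<And>i. 0 < i \<Longrightarrow> i \<le> k \<Longrightarrow> i < d \<Longrightarrow> T x i = 0" by blast
  define y where "y = T x"
  show ?case
  proof (cases "Suc k < d \<and> y (Suc k) \<noteq> 0")
    case False
    then show ?thesis using T unfolding y_def
      by (intro exI[of _ T]) (auto simp: le_Suc_eq)
  next
    case True
    then have kd: "Suc k < d" and y_Suc_k: "y (Suc k) \<noteq> 0" by auto
    obtain c s where cs: "c\<^sup>2 + s\<^sup>2 = 1" "s \<noteq> 0"
      and y0: "givens 0 (Suc k) c s y 0 > 0" and yk: "givens 0 (Suc k) c s y (Suc k) = 0"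
      using givens_annihilate[of 0 "Suc k" y] y_Suc_k by blast
    define T' where "T' = givens 0 (Suc k) c s \<circ> T"
    have "lborel_preserving d T'"
      unfolding T'_def using kd cs T by (intro lborel_preserving_comp lborel_preserving_givens) auto
    moreover have "preserves_ip d T'"
      unfolding T'_def using kd cs T by (intro preserves_ip_comp preserves_ip_givens) auto
    moreover have "T' x 0 > 0" "T' x (Suc k) = 0" using y0 yk by (simp_all add: T'_def y_def)
    moreover have "T' x i = T x i" if "0 < i" "i < Suc k" for i
      using that by (simp add: T'_def givens_def)
    ultimately show ?thesis using T
      by (intro exI[of _ T']) (auto simp: le_Suc_eq)
  qed
qed

lemma rotate_to_first_axis:
  assumes d: "2 \<le> d" and x: "vnorm d x = 1"
  shows "\<exists>T. lborel_preserving d T \<and> preserves_ip d T \<and> (\<forall>w. ip d (T x) w = w 0)"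
proof -
  obtain T where T: "lborel_preserving d T" "preserves_ip d T" "T x 0 \<ge> 0"
    and z: "\<And>i. 0 < i \<Longrightarrow> i < d \<Longrightarrow> T x i = 0"
    using rotate_into_first_coordinates[OF d, of x "d - 1"] by auto
  have "ip d (T x) (T x) = 1" using T(2) x by (simp add: preserves_ip_def vnorm_def)
  moreover have "ip d (T x) (T x) = (T x 0)\<^sup>2"
    unfolding ip_def using d z by (subst sum_lessThan_only0) (auto simp: power2_eq_square)
  ultimately have "T x 0 = 1" using T(3) by (simp add: power2_eq_1_iff)
  then have "ip d (T x) w = w 0" for w
    unfolding ip_def using d z by (subst sum_lessThan_only0) auto
  then show ?thesis using T by blast
qed

section \<open>The uniform measure on the sphere\<close>

lemma borel_measurable_component: "i \<in> I \<Longrightarrow> (\<lambda>x. x i) \<in> borel_measurable (PiM I (\<lambda>_. lborel :: real measure))"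
  using measurable_component_singleton[of i I "\<lambda>_. lborel :: real measure"] by simp

lemma borel_measurable_ip[measurable]: "(\<lambda>z. ip d x z) \<in> borel_measurable (lborel_R d)"
  unfolding ip_def by (intro borel_measurable_sum borel_measurable_times borel_measurable_const borel_measurable_component) auto

lemma borel_measurable_ip_self[measurable]: "(\<lambda>z. ip d z z) \<in> borel_measurable (lborel_R d)"
  unfolding ip_def by (intro borel_measurable_sum borel_measurable_times borel_measurable_component) auto

lemma borel_measurable_vnorm[measurable]: "(\<lambda>z. vnorm d z) \<in> borel_measurable (lborel_R d)"
  unfolding vnorm_def by measurable

lemma ip_self_nonneg: "ip d x x \<ge> 0"
  unfolding ip_def by (intro sum_nonneg) simp

lemma vnorm_le_1_iff: "vnorm d x \<le> 1 \<longleftrightarrow> ip d x x \<le> 1"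
  by (simp add: vnorm_def)

lemma ip_radial: "ip d x (radial d z) = ip d x z / vnorm d z"
  unfolding ip_def radial_def by (simp add: sum_divide_distrib)

lemma space_lborel_R: "space (lborel_R d) = PiE {..<d} (\<lambda>_. UNIV)"
  by (simp add: space_PiM)

lemma unit_ball_eq: "unit_ball d = {x \<in> space (lborel_R d). vnorm d x \<le> 1}"
  by (simp add: unit_ball_def space_lborel_R)

lemma sets_unit_ball[measurable]: "unit_ball d \<in> sets (lborel_R d)"
  unfolding unit_ball_eq by measurable

lemma measurable_radial: "radial d \<in> lborel_R d \<rightarrow>\<^sub>M PiM {..<d} (\<lambda>_. borel)"
  unfolding radial_def
  by (intro measurable_restrict borel_measurable_divide borel_measurable_vnorm borel_measurable_component) auto

lemma emeasure_unit_ball_finite: "emeasure (lborel_R d) (unit_ball d) < \<infinity>"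
proof -
  interpret P: product_sigma_finite "\<lambda>_. lborel :: real measure" by standard
  have "unit_ball d \<subseteq> PiE {..<d} (\<lambda>_. {-1..1})"
  proof
    fix x assume "x \<in> unit_ball d"
    then have x: "x \<in> PiE {..<d} (\<lambda>_. UNIV)" and n: "ip d x x \<le> 1"
      by (auto simp: unit_ball_def vnorm_le_1_iff)
    have "\<bar>x i\<bar> \<le> 1" if "i < d" for i
    proof -
      have "x i * x i \<le> (\<Sum>j<d. x j * x j)"
        using that by (intro member_le_sum) auto
      then have "x i * x i \<le> 1" using n by (simp add: ip_def)
      then show ?thesis by (metis abs_le_square_iff abs_one mult_1_right power2_eq_square)
    qed
    then show "x \<in> PiE {..<d} (\<lambda>_. {-1..1})" using x by (auto simp: PiE_def Pi_def abs_le_iff)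
  qed
  then have "emeasure (lborel_R d) (unit_ball d) \<le> emeasure (lborel_R d) (PiE {..<d} (\<lambda>_. {-1..1}))"
    by (intro emeasure_mono) (auto intro!: sets_PiM_I_finite)
  also have "\<dots> = (\<Prod>i<d. emeasure lborel {-1..(1::real)})"
    by (intro P.emeasure_PiM) auto
  also have "\<dots> = ennreal (2 ^ d)" using ennreal_power[of 2 d] by simp
  also have "\<dots> < \<infinity>" by simp
  finally show ?thesis .
qed

lemma emeasure_unit_ball_pos:
  assumes "d \<ge> 1"
  shows "emeasure (lborel_R d) (unit_ball d) > 0"
proof -
  interpret P: product_sigma_finite "\<lambda>_. lborel :: real measure" by standard
  have "PiE {..<d} (\<lambda>_. {-1/d..1/d}) \<subseteq> unit_ball d"
  proof
    fix x assume x: "x \<in> PiE {..<d} (\<lambda>_. {-1/real d..1/d})"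
    have "x i * x i \<le> 1 / real d * (1 / real d)" if "i < d" for i
    proof -
      have "\<bar>x i\<bar> \<le> 1 / d" using x that by (auto simp: PiE_def Pi_def abs_le_iff)
      then have "\<bar>x i\<bar> * \<bar>x i\<bar> \<le> 1 / real d * (1 / real d)" by (intro mult_mono) auto
      then show ?thesis by (simp add: abs_mult[symmetric])
    qed
    then have "ip d x x \<le> (\<Sum>i<d. 1 / real d * (1 / real d))" unfolding ip_def
      by (intro sum_mono) auto
    also have "\<dots> \<le> 1" using assms by simp
    finally show "x \<in> unit_ball d" using x by (auto simp: unit_ball_def vnorm_le_1_iff PiE_def)
  qed
  then have "emeasure (lborel_R d) (PiE {..<d} (\<lambda>_. {-1/real d..1/d})) \<le> emeasure (lborel_R d) (unit_ball d)"
    by (intro emeasure_mono sets_unit_ball)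
  moreover have "emeasure (lborel_R d) (PiE {..<d} (\<lambda>_. {-1/real d..1/d})) = (\<Prod>i<d. emeasure lborel {-1/real d..1/d})"
    by (intro P.emeasure_PiM) auto
  moreover have "(0::ennreal) < (\<Prod>i<d. emeasure lborel {-1/real d..1/d})"
    using assms by (simp add: ennreal_power)
  ultimately show ?thesis by simp
qed

abbreviation unif_ball :: "nat \<Rightarrow> (nat \<Rightarrow> real) measure" where
  "unif_ball d \<equiv> uniform_measure (lborel_R d) (unit_ball d)"

lemma sets_PiM_borel: "sets (PiM {..<d} (\<lambda>_. borel :: real measure)) = sets (lborel_R d)"
  by (intro sets_PiM_cong) auto

lemma measurable_radial_unif_ball: "radial d \<in> unif_ball d \<rightarrow>\<^sub>M PiM {..<d} (\<lambda>_. borel)"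
  using measurable_radial by (simp add: measurable_cong_sets[OF sets_uniform_measure refl])

lemma sets_unif_sphere: "sets (unif_sphere d) = sets (lborel_R d)"
  unfolding unif_sphere_def using sets_PiM_borel by simp

lemma space_unif_sphere: "space (unif_sphere d) = space (lborel_R d)"
  unfolding unif_sphere_def by (simp add: space_PiM)

lemma prob_space_unif_sphere: "d \<ge> 1 \<Longrightarrow> prob_space (unif_sphere d)"
  unfolding unif_sphere_def
  by (intro prob_space.prob_space_distr prob_space_uniform_measure measurable_radial_unif_ball)
     (use emeasure_unit_ball_pos[of d] emeasure_unit_ball_finite[of d] in auto)

lemma emeasure_unif_sphere:
  assumes P: "{w \<in> space (lborel_R d). P w} \<in> sets (lborel_R d)"
  shows "emeasure (unif_sphere d) {w \<in> space (unif_sphere d). P w} =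
    emeasure (lborel_R d) {z \<in> space (lborel_R d). vnorm d z \<le> 1 \<and> P (radial d z)} /
    emeasure (lborel_R d) (unit_ball d)"
proof -
  let ?A = "{w \<in> space (unif_sphere d). P w}"
  have A: "?A \<in> sets (PiM {..<d} (\<lambda>_. borel))"
    using P by (simp add: space_unif_sphere sets_PiM_borel)
  have "emeasure (unif_sphere d) ?A = emeasure (unif_ball d) (radial d -` ?A \<inter> space (unif_ball d))"
    using emeasure_distr[OF measurable_radial_unif_ball A] by (simp add: unif_sphere_def)
  also have "\<dots> = emeasure (lborel_R d) (unit_ball d \<inter> (radial d -` ?A \<inter> space (unif_ball d))) /
      emeasure (lborel_R d) (unit_ball d)"
    using measurable_sets[OF measurable_radial A] by (intro emeasure_uniform_measure) auto
  also have "unit_ball d \<inter> (radial d -` ?A \<inter> space (unif_ball d)) =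
      {z \<in> space (lborel_R d). vnorm d z \<le> 1 \<and> P (radial d z)}"
    by (auto simp: unit_ball_eq space_unif_sphere radial_def space_lborel_R)
  finally show ?thesis .
qed

section \<open>Caps around an arbitrary unit vector\<close>

lemma cone_section_unique:
  fixes \<alpha> R y :: real
  assumes a: "0 \<le> \<alpha>" "\<alpha> < 1" and R: "R \<ge> 0" and y: "y = \<alpha> * sqrt (y * y + R)"
  shows "y = sqrt (\<alpha>\<^sup>2 * R / (1 - \<alpha>\<^sup>2))"
proof -
  have y0: "y \<ge> 0" using y a R by (metis mult_nonneg_nonneg real_sqrt_ge_zero add_nonneg_nonneg zero_le_square)
  have "y * y = \<alpha>\<^sup>2 * (y * y + R)"
    using y R by (metis add_nonneg_nonneg mult_nonneg_nonneg power2_eq_square power_mult_distrib real_sqrt_pow2 zero_le_square)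
  then have "y * y * (1 - \<alpha>\<^sup>2) = \<alpha>\<^sup>2 * R" by algebra
  moreover have "1 - \<alpha>\<^sup>2 > 0" using a by (simp add: power_less_one_iff)
  ultimately have "y * y = \<alpha>\<^sup>2 * R / (1 - \<alpha>\<^sup>2)" by (simp add: eq_divide_eq)
  then show ?thesis using y0 by (metis real_sqrt_abs real_sqrt_mult abs_of_nonneg real_sqrt_mult_self)
qed

lemma sets_cone_surface:
  assumes "d \<ge> 1"
  shows "{z \<in> space (lborel_R d). z 0 = \<alpha> * vnorm d z} \<in> sets (lborel_R d)"
proof -
  have [measurable]: "(\<lambda>z. z 0) \<in> borel_measurable (lborel_R d)"
    using assms by (intro borel_measurable_component) auto
  show ?thesis by measurable
qed

text \<open>Fubini along the first coordinate: each line parallel to it meets the cone in at most one point.\<close>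

lemma emeasure_cone_surface:
  assumes d: "d \<ge> 1" and a: "0 \<le> \<alpha>" "\<alpha> < 1"
  shows "emeasure (lborel_R d) {z \<in> space (lborel_R d). z 0 = \<alpha> * vnorm d z} = 0"
proof -
  interpret P: product_sigma_finite "\<lambda>_. lborel :: real measure" by standard
  define N where "N = {z \<in> space (lborel_R d). z 0 = \<alpha> * vnorm d z}"
  have N: "N \<in> sets (lborel_R d)" using sets_cone_surface[OF d] by (simp add: N_def)
  define I where "I = {..<d} - {0}"
  have ins: "{..<d} = insert 0 I" "0 \<notin> I" "finite I" using d by (auto simp: I_def)
  have "emeasure (lborel_R d) N = (\<integral>\<^sup>+z. indicator N z \<partial>lborel_R d)"
    using N by simp
  also have "\<dots> = (\<integral>\<^sup>+ x. (\<integral>\<^sup>+ y. indicator N (x(0 := y)) \<partial>lborel) \<partial>PiM I (\<lambda>_. lborel))"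
    unfolding ins(1) using N ins(1) by (intro P.product_nn_integral_insert[OF ins(3,2)]) simp
  also have "\<dots> = (\<integral>\<^sup>+ x. 0 \<partial>PiM I (\<lambda>_. lborel :: real measure))"
  proof (rule nn_integral_cong)
    fix x :: "nat \<Rightarrow> real"
    define R where "R = (\<Sum>i\<in>I. x i * x i)"
    have R: "R \<ge> 0" unfolding R_def by (intro sum_nonneg) auto
    have "ip d (x(0 := y)) (x(0 := y)) = y * y + R" for y
    proof -
      have "ip d (x(0 := y)) (x(0 := y)) = y * y + (\<Sum>i\<in>I. (x(0 := y)) i * (x(0 := y)) i)"
        unfolding ip_def ins(1) using ins by (subst sum.insert) auto
      also have "(\<Sum>i\<in>I. (x(0 := y)) i * (x(0 := y)) i) = R"
        unfolding R_def using ins by (intro sum.cong) auto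
      finally show ?thesis .
    qed
    then have "indicator N (x(0 := y)) \<le> (indicator {sqrt (\<alpha>\<^sup>2 * R / (1 - \<alpha>\<^sup>2))} y :: ennreal)" for y
      using cone_section_unique[OF a R, of y] by (auto simp: N_def vnorm_def indicator_def)
    then have "(\<integral>\<^sup>+ y. indicator N (x(0 := y)) \<partial>lborel) \<le> (\<integral>\<^sup>+ y. indicator {sqrt (\<alpha>\<^sup>2 * R / (1 - \<alpha>\<^sup>2))} y \<partial>lborel)"
      by (intro nn_integral_mono) auto
    then show "(\<integral>\<^sup>+ y. indicator N (x(0 := y)) \<partial>lborel) = 0" by simp
  qed
  finally show ?thesis by (simp add: N_def)
qed

lemma AE_unif_sphere_unit:
  assumes d: "d \<ge> 1"
  shows "AE w in unif_sphere d. vnorm d w = 1"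
proof -
  let ?N = "{z \<in> space (lborel_R d). z 0 = 0 * vnorm d z}"
  have N: "?N \<in> sets (lborel_R d)" "emeasure (lborel_R d) ?N = 0"
    using sets_cone_surface[OF d, of 0] emeasure_cone_surface[OF d, of 0] by simp_all
  have "emeasure (lborel_R d) (unit_ball d \<inter> ?N) = 0"
    using N emeasure_mono[of "unit_ball d \<inter> ?N" ?N "lborel_R d"] by simp
  then have "emeasure (unif_ball d) ?N = 0"
    using N by (simp add: emeasure_uniform_measure)
  then have off_N: "AE z in unif_ball d. z \<notin> ?N"
    using N by (intro AE_I'[of ?N]) (auto simp: null_sets_def)
  have "AE z in unif_ball d. vnorm d (radial d z) = 1"
  proof (rule eventually_mono[OF eventually_conj[OF AE_space off_N]])
    fix z assume "z \<in> space (unif_ball d) \<and> z \<notin> ?N"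
    then have "z 0 \<noteq> 0" by simp
    moreover have "z 0 * z 0 \<le> ip d z z" unfolding ip_def using d by (intro member_le_sum) auto
    ultimately have ipp: "ip d z z > 0" by (metis less_le_trans not_real_square_gt_zero)
    have "ip d (radial d z) (radial d z) = ip d z z / (vnorm d z * vnorm d z)"
      unfolding ip_def radial_def by (simp add: sum_divide_distrib)
    also have "vnorm d z * vnorm d z = ip d z z" unfolding vnorm_def using ipp by simp
    finally show "vnorm d (radial d z) = 1" using ipp by (simp add: vnorm_def)
  qed
  moreover have "{x \<in> space (PiM {..<d} (\<lambda>_. borel)). vnorm d x = 1} \<in> sets (PiM {..<d} (\<lambda>_. borel))"
    unfolding sets_PiM_borel space_PiM[symmetric] space_lborel_R[symmetric] by measurable
  ultimately show ?thesis unfolding unif_sphere_def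
    using AE_distr_iff[OF measurable_radial_unif_ball] by simp
qed

text \<open>Rotation invariance of the sphere measure: a rotation taking \<open>x\<close> to the first axis
  reduces the cap around \<open>x\<close> to the cap of the definition of \<open>cap\<close>; the boundary between
  \<open>\<ge>\<close> and \<open>>\<close> is the null cone surface.\<close>

lemma emeasure_near_le_cap:
  assumes d: "d \<ge> 2" and a: "0 < \<alpha>" "\<alpha> < 1" and x: "vnorm d x = 1"
  shows "emeasure (unif_sphere d) {w \<in> space (unif_sphere d). \<alpha> \<le> ip d x w} \<le> ennreal (cap d \<alpha>)"
proof -
  have [measurable]: "(\<lambda>z. z 0) \<in> borel_measurable (lborel_R d)"
    using d by (intro borel_measurable_component) auto
  obtain T where T: "lborel_preserving d T" "preserves_ip d T" "\<And>w. ip d (T x) w = w 0"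
    using rotate_to_first_axis[OF d x] by blast
  let ?V = "emeasure (lborel_R d) (unit_ball d)"
  let ?N = "{z \<in> space (lborel_R d). z 0 = \<alpha> * vnorm d z}"
  define Qge where "Qge = (\<lambda>w. vnorm d w \<le> 1 \<and> \<alpha> \<le> w 0 / vnorm d w)"
  define Qgt where "Qgt = (\<lambda>w. vnorm d w \<le> 1 \<and> \<alpha> < w 0 / vnorm d w)"
  have Qge: "{w \<in> space (lborel_R d). Qge w} \<in> sets (lborel_R d)" unfolding Qge_def by measurable
  have Qgt: "{w \<in> space (lborel_R d). Qgt w} \<in> sets (lborel_R d)" unfolding Qgt_def by measurable
  have N: "?N \<in> sets (lborel_R d)" "emeasure (lborel_R d) ?N = 0"
    using sets_cone_surface emeasure_cone_surface d a by auto
  have vnorm_T: "vnorm d (T z) = vnorm d z" for z using T(2) by (simp add: vnorm_def preserves_ip_def)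
  have ip_x_radial: "ip d x (radial d z) = T z 0 / vnorm d (T z)" for z
    unfolding ip_radial vnorm_T using T(2) T(3)[of "T z"] by (simp add: preserves_ip_def)
  have "emeasure (unif_sphere d) {w \<in> space (unif_sphere d). \<alpha> \<le> ip d x w} =
    emeasure (lborel_R d) {z \<in> space (lborel_R d). Qge (T z)} / ?V"
    by (subst emeasure_unif_sphere) (simp_all add: Qge_def ip_x_radial vnorm_T)
  also have "\<dots> = emeasure (lborel_R d) {w \<in> space (lborel_R d). Qge w} / ?V"
    by (simp add: emeasure_lborel_preserving[OF T(1) Qge])
  also have "\<dots> \<le> emeasure (lborel_R d) {w \<in> space (lborel_R d). Qgt w} / ?V"
  proof (intro divide_right_mono_ennreal)
    have "w \<in> ?N" if "Qge w" "\<not> Qgt w" "w \<in> space (lborel_R d)" for w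
    proof -
      have "vnorm d w \<noteq> 0" using that a by (auto simp: Qge_def)
      then have "vnorm d w > 0" using ip_self_nonneg[of d w] by (simp add: vnorm_def)
      then show ?thesis using that by (auto simp: Qge_def Qgt_def field_simps)
    qed
    then have "{w \<in> space (lborel_R d). Qge w} \<subseteq> {w \<in> space (lborel_R d). Qgt w} \<union> ?N"
      by blast
    then have "emeasure (lborel_R d) {w \<in> space (lborel_R d). Qge w} \<le>
        emeasure (lborel_R d) {w \<in> space (lborel_R d). Qgt w} + emeasure (lborel_R d) ?N"
      using Qgt N by (metis (no_types, lifting) emeasure_mono emeasure_subadditive order_trans sets.Un)
    then show "emeasure (lborel_R d) {w \<in> space (lborel_R d). Qge w} \<le> emeasure (lborel_R d) {w \<in> space (lborel_R d). Qgt w}"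
      using N by simp
  qed
  also have "\<dots> = emeasure (unif_sphere d) {w \<in> space (unif_sphere d). w 0 > \<alpha>}"
    using d by (subst emeasure_unif_sphere) (simp_all add: Qgt_def radial_def)
  also have "\<dots> = ennreal (cap d \<alpha>)"
  proof -
    interpret prob_space "unif_sphere d" using prob_space_unif_sphere d by simp
    show ?thesis unfolding cap_def by (simp add: emeasure_eq_measure)
  qed
  finally show ?thesis .
qed

section \<open>Concentration of the degrees\<close>

lemma borel_measurable_component_unif_sphere: "k < d \<Longrightarrow> (\<lambda>w. w k) \<in> borel_measurable (unif_sphere d)"
  by (subst measurable_cong_sets[OF sets_unif_sphere refl]) (rule borel_measurable_component, simp)

lemma borel_measurable_ip_unif_sphere[measurable]: "(\<lambda>w. ip d y w) \<in> borel_measurable (unif_sphere d)"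
  by (subst measurable_cong_sets[OF sets_unif_sphere refl]) (rule borel_measurable_ip)

lemma borel_measurable_ip_data[measurable]:
  assumes "i < n" "j < n"
  shows "(\<lambda>D. ip d (D i) (D j)) \<in> borel_measurable (data_measure d n)"
  unfolding ip_def data_measure_def
proof (intro borel_measurable_sum borel_measurable_times)
  fix k assume k: "k \<in> {..<d}"
  have "(\<lambda>D. D i k) \<in> borel_measurable (PiM {..<n} (\<lambda>_. unif_sphere d))" if "i < n" for i
    using measurable_comp[OF measurable_component_singleton[of i "{..<n}" "\<lambda>_. unif_sphere d"]
        borel_measurable_component_unif_sphere[of k d]] that k
    by (simp add: comp_def)
  then show "(\<lambda>D. D i k) \<in> borel_measurable (PiM {..<n} (\<lambda>_. unif_sphere d))"
    "(\<lambda>D. D j k) \<in> borel_measurable (PiM {..<n} (\<lambda>_. unif_sphere d))" using assms by auto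
qed

lemma nbrs_eq: "nbrs d n \<alpha> D i = {j \<in> {..<n} - {i}. \<alpha> \<le> ip d (D i) (D j)}"
  by (auto simp: nbrs_def)

lemma borel_measurable_card_nbrs[measurable]:
  assumes i: "i < n"
  shows "(\<lambda>D. real (card (nbrs d n \<alpha> D i))) \<in> borel_measurable (data_measure d n)"
proof -
  have "real (card (nbrs d n \<alpha> D i)) = (\<Sum>j\<in>{..<n} - {i}. of_bool (\<alpha> \<le> ip d (D i) (D j)))" for D
    by (subst sum_of_bool_eq) (auto simp: nbrs_eq intro!: arg_cong[where f=card])
  moreover have "(\<lambda>D. \<Sum>j\<in>{..<n} - {i}. of_bool (\<alpha> \<le> ip d (D i) (D j)) :: real) \<in> borel_measurable (data_measure d n)"
    using i by (intro borel_measurable_sum) measurable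
  ultimately show ?thesis by simp
qed

lemma prod_if_2_1:
  assumes "finite J"
  shows "(\<Prod>j\<in>J. (if P j then 2 else 1 :: ennreal)) = ennreal (2 ^ card {j \<in> J. P j})"
proof -
  have "(\<Prod>j\<in>J. (if P j then 2 else 1 :: ennreal)) = (\<Prod>j\<in>J \<inter> {x. P x}. 2) * (\<Prod>j\<in>J \<inter> - {x. P x}. 1)"
    using assms by (rule prod.If_cases)
  also have "\<dots> = 2 ^ card {j \<in> J. P j}" by (simp add: Int_def conj_commute)
  finally show ?thesis using ennreal_power[of 2] by simp
qed

lemma nn_integral_neighbour_weight:
  assumes d: "d \<ge> 2" and a: "0 < \<alpha>" "\<alpha> < 1" and y: "vnorm d y = 1"
  shows "(\<integral>\<^sup>+w. (if \<alpha> \<le> ip d y w then 2 else 1) \<partial>unif_sphere d) \<le> ennreal (1 + cap d \<alpha>)"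
proof -
  interpret prob_space "unif_sphere d" using prob_space_unif_sphere d by simp
  let ?A = "{w \<in> space (unif_sphere d). \<alpha> \<le> ip d y w}"
  have A: "?A \<in> sets (unif_sphere d)" by measurable
  have "(\<integral>\<^sup>+w. (if \<alpha> \<le> ip d y w then 2 else 1) \<partial>unif_sphere d) =
      (\<integral>\<^sup>+w. 1 + indicator ?A w \<partial>unif_sphere d)"
    by (intro nn_integral_cong) (auto simp: indicator_def one_add_one)
  also have "\<dots> = 1 + emeasure (unif_sphere d) ?A"
    using A by (subst nn_integral_add) (auto simp: emeasure_space_1)
  also have "\<dots> \<le> 1 + ennreal (cap d \<alpha>)"
    using emeasure_near_le_cap[OF d a y] by (simp add: add_left_mono)
  finally show ?thesis by (simp add: cap_def ennreal_plus)
qed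

lemma nn_integral_prod_neighbour_weights:
  assumes d: "d \<ge> 2" and a: "0 < \<alpha>" "\<alpha> < 1" and y: "vnorm d y = 1" and J: "finite J"
  shows "(\<integral>\<^sup>+x. (\<Prod>j\<in>J. if \<alpha> \<le> ip d y (x j) then 2 else 1) \<partial>PiM J (\<lambda>_. unif_sphere d))
    \<le> ennreal (exp (real (card J) * cap d \<alpha>))"
proof -
  interpret M: prob_space "unif_sphere d" using prob_space_unif_sphere d by simp
  interpret P: product_sigma_finite "\<lambda>_. unif_sphere d"
    by (simp add: product_sigma_finite_def M.sigma_finite_measure_axioms)
  have cap: "cap d \<alpha> \<ge> 0" by (simp add: cap_def)
  have "(\<integral>\<^sup>+x. (\<Prod>j\<in>J. if \<alpha> \<le> ip d y (x j) then 2 else 1) \<partial>PiM J (\<lambda>_. unif_sphere d))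
      = (\<Prod>j\<in>J. \<integral>\<^sup>+w. (if \<alpha> \<le> ip d y w then 2 else 1) \<partial>unif_sphere d)"
    using J by (intro P.product_nn_integral_prod) auto
  also have "\<dots> \<le> ennreal (1 + cap d \<alpha>) ^ card J"
    using nn_integral_neighbour_weight[OF d a y] by (simp add: power_mono)
  also have "\<dots> = ennreal ((1 + cap d \<alpha>) ^ card J)"
    using cap by (subst ennreal_power) simp_all
  also have "\<dots> \<le> ennreal (exp (real (card J) * cap d \<alpha>))"
  proof (rule ennreal_leI)
    have "(1 + cap d \<alpha>) ^ card J \<le> exp (cap d \<alpha>) ^ card J"
      using cap by (intro power_mono) (auto simp: exp_ge_add_one_self add.commute)
    then show "(1 + cap d \<alpha>) ^ card J \<le> exp (real (card J) * cap d \<alpha>)"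
      by (simp add: exp_of_nat_mult)
  qed
  finally show ?thesis .
qed

text \<open>Chernoff bound for the degree of a fixed vertex: \<open>2 ^ card (nbrs \<dots>)\<close> is a product of
  independent factors, one per other data point, each of expectation at most \<open>1 + cap d \<alpha>\<close>.\<close>

lemma emeasure_degree_ge:
  assumes d: "d \<ge> 2" and a: "0 < \<alpha>" "\<alpha> < 1" and i: "i < n"
  shows "emeasure (data_measure d n) {D \<in> space (data_measure d n). t \<le> real (card (nbrs d n \<alpha> D i))}
     \<le> ennreal (2 powr (- t) * exp (real n * cap d \<alpha>))"
proof -
  define M where "M = unif_sphere d"
  interpret M: prob_space M using prob_space_unif_sphere d by (simp add: M_def)
  interpret P: product_sigma_finite "\<lambda>_. M"
    by (simp add: product_sigma_finite_def M.sigma_finite_measure_axioms)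
  define J where "J = {..<n} - {i}"
  have ins: "{..<n} = insert i J" "i \<notin> J" "finite J" using i by (auto simp: J_def)
  define h where "h = (\<lambda>y w. if \<alpha> \<le> ip d y w then 2 else 1 :: ennreal)"
  define F where "F = (\<lambda>D. \<Prod>j\<in>J. h (D i) (D j))"
  have cap: "cap d \<alpha> \<ge> 0" by (simp add: cap_def)
  have Fm: "F \<in> borel_measurable (PiM {..<n} (\<lambda>_. M))"
    unfolding F_def h_def M_def data_measure_def[symmetric] using i
    by (intro borel_measurable_prod_ennreal) (auto simp: J_def)
  define B where "B = {D \<in> space (data_measure d n). t \<le> real (card (nbrs d n \<alpha> D i))}"
  have Bm: "B \<in> sets (PiM {..<n} (\<lambda>_. M))"
    unfolding B_def M_def data_measure_def[symmetric] using i by measurable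
  have "indicator B D \<le> ennreal (2 powr (- t)) * F D" for D
  proof (cases "D \<in> B")
    case True
    then have "1 \<le> 2 powr (real (card (nbrs d n \<alpha> D i)) - t)"
      by (intro ge_one_powr_ge_zero) (auto simp: B_def)
    also have "\<dots> = 2 powr (- t) * 2 ^ card (nbrs d n \<alpha> D i)"
      by (simp add: powr_diff powr_realpow divide_inverse powr_minus)
    finally show ?thesis using True unfolding F_def h_def
      by (subst prod_if_2_1[OF ins(3)])
         (simp add: nbrs_eq J_def ennreal_mult[symmetric] ennreal_1[symmetric] del: ennreal_1)
  qed simp
  then have "emeasure (data_measure d n) B \<le> (\<integral>\<^sup>+D. ennreal (2 powr (- t)) * F D \<partial>PiM {..<n} (\<lambda>_. M))"
    using Bm by (simp add: data_measure_def M_def nn_integral_mono flip: nn_integral_indicator)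
  also have "\<dots> = ennreal (2 powr (- t)) * (\<integral>\<^sup>+ y. (\<integral>\<^sup>+ x. F (x(i := y)) \<partial>PiM J (\<lambda>_. M)) \<partial>M)"
    using Fm ins by (simp add: nn_integral_cmult P.product_nn_integral_insert_rev)
  also have "(\<integral>\<^sup>+ y. (\<integral>\<^sup>+ x. F (x(i := y)) \<partial>PiM J (\<lambda>_. M)) \<partial>M) \<le> (\<integral>\<^sup>+ y. ennreal (exp (real n * cap d \<alpha>)) \<partial>M)"
  proof (rule nn_integral_mono_AE, rule eventually_mono[OF AE_unif_sphere_unit[of d, folded M_def]])
    fix y assume y: "vnorm d y = 1"
    have "(\<integral>\<^sup>+ x. F (x(i := y)) \<partial>PiM J (\<lambda>_. M)) = (\<integral>\<^sup>+ x. (\<Prod>j\<in>J. h y (x j)) \<partial>PiM J (\<lambda>_. M))"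
      unfolding F_def using ins(2) by (intro nn_integral_cong prod.cong) auto
    also have "\<dots> \<le> ennreal (exp (real (card J) * cap d \<alpha>))"
      unfolding h_def M_def by (rule nn_integral_prod_neighbour_weights[OF d a y ins(3)])
    also have "\<dots> \<le> ennreal (exp (real n * cap d \<alpha>))"
      using cap card_mono[of "{..<n}" J] by (intro ennreal_leI) (simp add: J_def mult_right_mono)
    finally show "(\<integral>\<^sup>+ x. F (x(i := y)) \<partial>PiM J (\<lambda>_. M)) \<le> ennreal (exp (real n * cap d \<alpha>))" .
  qed (use d in simp)
  finally show ?thesis
    unfolding B_def by (simp add: M.emeasure_space_1 ennreal_mult mult_left_mono)
qed

lemma powr_exp_tail:
  fixes m :: real
  assumes "m \<ge> 0"
  shows "2 powr (- (4 * m)) * exp m \<le> exp (- m)"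
proof -
  have "2 powr (- (4 * m)) * exp m = exp (m - 4 * m * ln 2)"
    by (simp add: powr_def exp_add[symmetric] mult.commute)
  also have "\<dots> \<le> exp (- m)"
  proof (rule exp_mono)
    have "4 * m * (2 / 3) \<le> 4 * m * ln 2"
      using ln2_ge_two_thirds assms by (intro mult_left_mono) auto
    then show "m - 4 * m * ln 2 \<le> - m" using assms by simp
  qed
  finally show ?thesis .
qed

lemma degrees_bounded_whp:
  assumes d: "d \<ge> 2" and a: "0 < \<alpha>" "\<alpha> < 1"
  shows "\<exists>G \<in> sets (data_measure d n).
           measure (data_measure d n) G \<ge> 1 - real n * exp (- real n * cap d \<alpha>) \<and>
           (\<forall>D \<in> G. \<forall>i < n. real (card (nbrs d n \<alpha> D i)) \<le> 4 * (real n * cap d \<alpha>))"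
proof -
  define DM where "DM = data_measure d n"
  interpret DM: prob_space DM unfolding DM_def data_measure_def
    using prob_space_unif_sphere d by (intro prob_space_PiM) auto
  define m where "m = real n * cap d \<alpha>"
  have m: "m \<ge> 0" by (simp add: m_def cap_def)
  define B where "B = (\<lambda>i. {D \<in> space DM. 4 * m \<le> real (card (nbrs d n \<alpha> D i))})"
  have B: "B i \<in> sets DM" if "i < n" for i
    using that unfolding B_def DM_def by measurable
  have Bp: "measure DM (B i) \<le> exp (- m)" if i: "i < n" for i
  proof -
    have "emeasure DM (B i) \<le> ennreal (2 powr (- (4 * m)) * exp m)"
      unfolding B_def DM_def m_def by (rule emeasure_degree_ge[OF d a i])
    also have "\<dots> \<le> ennreal (exp (- m))"
      using powr_exp_tail[OF m] by (rule ennreal_leI)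
    finally show ?thesis using DM.emeasure_eq_measure by (simp add: ennreal_le_iff)
  qed
  define G where "G = space DM - (\<Union>i<n. B i)"
  have U: "(\<Union>i<n. B i) \<in> sets DM" using B by auto
  have "measure DM (\<Union>i<n. B i) \<le> (\<Sum>i<n. measure DM (B i))"
    using B by (intro DM.finite_measure_subadditive_finite) auto
  also have "\<dots> \<le> real n * exp (- m)"
    using Bp sum_bounded_above[of "{..<n}" "\<lambda>i. measure DM (B i)" "exp (- m)"] by simp
  finally have "measure DM G \<ge> 1 - real n * exp (- m)"
    using U by (simp add: G_def DM.prob_compl)
  moreover have "G \<in> sets DM" using U by (simp add: G_def)
  moreover have "real (card (nbrs d n \<alpha> D i)) \<le> 4 * m" if "D \<in> G" "i < n" for D i
  proof -
    from that have "\<not> 4 * m \<le> real (card (nbrs d n \<alpha> D i))"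
      by (auto simp: G_def B_def)
    then show ?thesis by simp
  qed
  ultimately show ?thesis unfolding DM_def m_def by (intro bexI[of _ G]) auto
qed

lemma tour_neighbourhoods_bounded:
  assumes d: "d \<ge> 2" and a: "0 < \<alpha>" "\<alpha> < 1"
  shows "\<exists>G \<in> sets (data_measure d n).
           measure (data_measure d n) G \<ge> 1 - real n * exp (- 1 * real n * cap d \<alpha>) \<and>
           (\<forall>D \<in> G. \<forall>ps. tour_path d n \<alpha> D q ps \<longrightarrow> length ps \<le> 2 * d + 1 \<longrightarrow>
              real (\<Sum>i<length ps. card (nbrs d n \<alpha> D (ps ! i)))
                \<le> 10 * real d * real n * cap d \<alpha>)"
proof -
  define m where "m = real n * cap d \<alpha>"
  have m: "m \<ge> 0" by (simp add: m_def cap_def)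
  obtain G where G: "G \<in> sets (data_measure d n)"
      "measure (data_measure d n) G \<ge> 1 - real n * exp (- m)"
    and deg: "\<And>D i. D \<in> G \<Longrightarrow> i < n \<Longrightarrow> real (card (nbrs d n \<alpha> D i)) \<le> 4 * m"
    using degrees_bounded_whp[OF d a, of n] unfolding m_def by (elim bexE conjE) auto
  have "real (\<Sum>i<length ps. card (nbrs d n \<alpha> D (ps ! i))) \<le> 10 * real d * real n * cap d \<alpha>"
    if D: "D \<in> G" and tour: "tour_path d n \<alpha> D q ps" and len: "length ps \<le> 2 * d + 1" for D ps
  proof -
    have "(\<Sum>i<length ps. real (card (nbrs d n \<alpha> D (ps ! i)))) \<le> real (card {..<length ps}) * (4 * m)"
      using tour D by (intro sum_bounded_above deg) (auto simp: tour_path_def)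
    also have "\<dots> \<le> real (2 * d + 1) * (4 * m)"
      using len m by (intro mult_right_mono) auto
    also have "\<dots> = (8 * real d + 4) * m" by (simp add: algebra_simps)
    also have "\<dots> \<le> 10 * real d * m" using d m by (intro mult_right_mono) auto
    finally show ?thesis by (simp add: m_def mult.assoc)
  qed
  with G show ?thesis unfolding m_def by (intro bexI[of _ G] conjI allI ballI impI) simp_all
qed

theorem lemma17:
  "\<exists>K c. K > 0 \<and> c > 0 \<and>
     (\<forall>d n \<alpha> q. d \<ge> 2 \<longrightarrow> n \<ge> 1 \<longrightarrow> 0 < \<alpha> \<longrightarrow> \<alpha> < 1 \<longrightarrow> q \<in> unit_sphere d \<longrightarrow>
        (\<exists>G \<in> sets (data_measure d n).
           measure (data_measure d n) G \<ge> 1 - real n * exp (- c * real n * cap d \<alpha>) \<and>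
           (\<forall>D \<in> G. \<forall>ps. tour_path d n \<alpha> D q ps \<longrightarrow> length ps \<le> 2 * d + 1 \<longrightarrow>
              real (\<Sum>i<length ps. card (nbrs d n \<alpha> D (ps ! i)))
                \<le> K * real d * real n * cap d \<alpha>)))"
  using tour_neighbourhoods_bounded by (intro exI[of _ "10::real"] exI[of _ "1::real"]) auto

end
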